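(* In the setting described in the context, let $(x_1,L_1),(x_2,L_2),(x_3,L_3)\in\mathcal E_\varphi$ with $x_1,x_2,x_3$ pairwise distinct and $L_1,L_2,L_3$ pairwise transverse. Then $\beta_n(L_1,L_2,L_3)=n\beta_1(x_1,x_2,x_3)$.
   Context: $V$ real symplectic of dimension $2n$, $\mathcal L(V)$ its Lagrangian Grassmannian, $\Gamma<\mathrm{PU}(1,1)$ a torsion-free cocompact lattice acting on $\mathbb S^1=\partial\mathcal D_{1,1}$, $\rho:\Gamma\to\mathrm{Sp}(V)$ a homomorphism, and $\varphi:\mathbb S^1\to\mathcal L(V)$ a $\rho$-equivariant measurable map such that (i) $\beta_n(\varphi(x),\varphi(y),\varphi(z))=n\beta_1(x,y,z)$ for Lebesgue-a.e. $(x,y,z)$, and (ii) for every $L\in\mathcal L(V)$ the set of $x$ with $\varphi(x)\cap L\neq0$ has Lebesgue measure zero. Here $\beta_n(L_1,L_2,L_3)$ is the signature of $(x_1,x_2,x_3)\mapsto\langle x_1,x_2\rangle+\langle x_2,x_3\rangle+\langle x_3,x_1\rangle$ on $L_1\oplus L_2\oplus L_3$, and $\beta_1(x,y,z)=\pm1$ for pairwise distinct positively/negatively cyclically ordered triples in $\mathbb S^1$, $0$ otherwise. The essential graph $\mathcal E_\varphi\subset\mathbb S^1\times\mathcal L(V)$ is the support of the pushforward of Lebesgue measure under $x\mapsto(x,\varphi(x))$. *)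

theory Defs
  imports "HOL-Analysis.Analysis"
begin

type_synonym 'n sympl = "(real^'n) \<times> (real^'n)"

definition omega :: "'n::finite sympl \<Rightarrow> 'n sympl \<Rightarrow> real" where
  "omega u v = fst u \<bullet> snd v - snd u \<bullet> fst v"

definition lagrangians :: "'n::finite sympl set set" where
  "lagrangians = {L. subspace L \<and> dim L = CARD('n) \<and> (\<forall>u\<in>L. \<forall>v\<in>L. omega u v = 0)}"

definition transverse :: "'n::finite sympl set \<Rightarrow> 'n sympl set \<Rightarrow> bool" where
  "transverse L M \<longleftrightarrow> L \<inter> M = {0}"

text \<open>Gap (Hausdorff distance of unit balls) metric inducing the usual topology
  of the Grassmannian.\<close>
definition gdist :: "'n::finite sympl set \<Rightarrow> 'n sympl set \<Rightarrow> real" where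
  "gdist L M = max (SUP u\<in>L \<inter> cball 0 1. infdist u M) (SUP v\<in>M \<inter> cball 0 1. infdist v L)"

definition pos_index :: "('a::euclidean_space \<Rightarrow> real) \<Rightarrow> 'a set \<Rightarrow> nat" where
  "pos_index Q W = Max {dim U | U. subspace U \<and> U \<subseteq> W \<and> (\<forall>u\<in>U. u \<noteq> 0 \<longrightarrow> Q u > 0)}"

definition signature :: "('a::euclidean_space \<Rightarrow> real) \<Rightarrow> 'a set \<Rightarrow> int" where
  "signature Q W = int (pos_index Q W) - int (pos_index (\<lambda>u. - Q u) W)"

definition beta_n :: "'n::finite sympl set \<Rightarrow> 'n sympl set \<Rightarrow> 'n sympl set \<Rightarrow> int" where
  "beta_n L1 L2 L3 =
     signature (\<lambda>(x1, x2, x3). omega x1 x2 + omega x2 x3 + omega x3 x1) (L1 \<times> L2 \<times> L3)"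

definition circle :: "complex set" where
  "circle = {z. cmod z = 1}"

definition pos_cyclic :: "complex \<Rightarrow> complex \<Rightarrow> complex \<Rightarrow> bool" where
  "pos_cyclic x y z \<longleftrightarrow> (\<exists>a b c. x = cis a \<and> y = cis b \<and> z = cis c \<and> a < b \<and> b < c \<and> c < a + 2 * pi)"

definition beta_1 :: "complex \<Rightarrow> complex \<Rightarrow> complex \<Rightarrow> int" where
  "beta_1 x y z = (if pos_cyclic x y z then 1 else if pos_cyclic x z y then -1 else 0)"

text \<open>The element of PU(1,1) given by (a,b) with |a|^2-|b|^2=1, as a map on the
  closed disc (extended by the identity outside, so that composition is exact).\<close>
definition mob :: "complex \<Rightarrow> complex \<Rightarrow> complex \<Rightarrow> complex" where
  "mob a b z = (if cmod z \<le> 1 then (a * z + b) / (cnj b * z + cnj a) else z)"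

definition SU11 :: "(complex \<times> complex) set" where
  "SU11 = {(a, b). (cmod a)\<^sup>2 - (cmod b)\<^sup>2 = 1}"

definition PU11 :: "(complex \<Rightarrow> complex) set" where
  "PU11 = {mob a b | a b. (a, b) \<in> SU11}"

definition torsion_free_cocompact_lattice :: "(complex \<Rightarrow> complex) set \<Rightarrow> bool" where
  "torsion_free_cocompact_lattice \<Gamma> \<longleftrightarrow>
     \<Gamma> \<subseteq> PU11 \<and> id \<in> \<Gamma> \<and> (\<forall>g\<in>\<Gamma>. \<forall>h\<in>\<Gamma>. g \<circ> h \<in> \<Gamma>) \<and> (\<forall>g\<in>\<Gamma>. inv g \<in> \<Gamma>)
     \<comment> \<open>discrete: the identity is isolated (topology of PU(1,1) = quotient of SU(1,1))\<close>
     \<and> (\<exists>e>0. \<forall>(a, b)\<in>SU11. mob a b \<in> \<Gamma> \<and> mob a b \<noteq> id \<longrightarrow>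
            dist (a, b) (1, 0) \<ge> e \<and> dist (a, b) (-1, 0) \<ge> e)
     \<comment> \<open>cocompact: PU(1,1) = Gamma C with C compact\<close>
     \<and> (\<exists>S. compact S \<and> S \<subseteq> SU11 \<and> (\<forall>g\<in>PU11. \<exists>\<gamma>\<in>\<Gamma>. \<exists>(a, b)\<in>S. g = \<gamma> \<circ> mob a b))
     \<comment> \<open>torsion-free\<close>
     \<and> (\<forall>g\<in>\<Gamma>. \<forall>k::nat. k > 0 \<and> (g ^^ k) = id \<longrightarrow> g = id)"

definition symplectic :: "('n::finite sympl \<Rightarrow> 'n sympl) \<Rightarrow> bool" where
  "symplectic g \<longleftrightarrow> linear g \<and> bij g \<and> (\<forall>u v. omega (g u) (g v) = omega u v)"

definition is_hom :: "(complex \<Rightarrow> complex) set \<Rightarrow> ((complex \<Rightarrow> complex) \<Rightarrow> ('n::finite sympl \<Rightarrow> 'n sympl)) \<Rightarrow> bool" where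
  "is_hom \<Gamma> \<rho> \<longleftrightarrow> (\<forall>g\<in>\<Gamma>. symplectic (\<rho> g)) \<and> (\<forall>g\<in>\<Gamma>. \<forall>h\<in>\<Gamma>. \<rho> (g \<circ> h) = \<rho> g \<circ> \<rho> h)"

text \<open>Lebesgue measure on the circle is the image of Lebesgue measure on [0,2pi)
  under t \<mapsto> cis t.  Measurability w.r.t. the Borel structure of the Grassmannian
  (generated by the open gdist-balls, the Grassmannian being separable).\<close>
definition lag_measurable :: "(complex \<Rightarrow> 'n::finite sympl set) \<Rightarrow> bool" where
  "lag_measurable \<phi> \<longleftrightarrow>
     (\<forall>L\<in>lagrangians. \<forall>r. {t. gdist (\<phi> (cis t)) L < r} \<in> sets lebesgue)"

definition essential_graph :: "(complex \<Rightarrow> 'n::finite sympl set) \<Rightarrow> (complex \<times> 'n sympl set) set" where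
  "essential_graph \<phi> = {(x, L). x \<in> circle \<and> L \<in> lagrangians \<and>
      (\<forall>r>0. emeasure lebesgue {t \<in> {0..<2*pi}. dist (cis t) x < r \<and> gdist (\<phi> (cis t)) L < r} > 0)}"

end

theory Submission
  imports Defs
begin

(*
  Both cocycles are locally constant at the given triple, while condition (i) holds at almost
  every triple of the circle.

  For pairwise transverse Lagrangians the Maslov form (x1, x2, x3) |-> omega x1 x2 +
  omega x2 x3 + omega x3 x1 is nondegenerate on L1 x L2 x L3.  The positive and the negative
  index of a quadratic form can only grow under a linear map close to the identity, and on a
  space of the same dimension they add up to at most that dimension; for a nondegenerate form
  they already add up to the dimension, so both stay constant.  Orthogonal projections onto
  nearby Lagrangians are such maps, hence beta_n is constant on a gap-metric neighbourhood of
  (L1, L2, L3).  For distinct points of the circle, beta_1 is the sign of the continuous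
  function Im (cnj x * y + cnj y * z + cnj z * x), so it is locally constant as well.

  Since (x_i, L_i) lies in the essential graph, the parameters t with cis t near x_i and
  phi (cis t) near L_i form a set of positive measure.  The product of the three sets has
  positive measure, so it contains a triple at which (i) holds, and both sides of (i) there
  agree with the corresponding sides at (x_i, L_i).  Only hypothesis (i) is needed.
*)

section \<open>Positive index and signature of quadratic forms\<close>

definition posdef_on :: "('a::real_vector \<Rightarrow> real) \<Rightarrow> 'a set \<Rightarrow> bool" where
  "posdef_on Q U \<longleftrightarrow> (\<forall>u\<in>U. u \<noteq> 0 \<longrightarrow> 0 < Q u)"

lemma pos_index_eq_Max:
  "pos_index Q W = Max {dim U | U. subspace U \<and> U \<subseteq> W \<and> posdef_on Q U}"
  by (simp add: pos_index_def posdef_on_def)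

lemma finite_dims_posdef_subspaces:
  fixes W :: "'a::euclidean_space set"
  shows "finite {dim U | U. subspace U \<and> U \<subseteq> W \<and> posdef_on Q U}"
  by (rule finite_subset[of _ "{..dim W}"]) (auto intro: dim_subset)

lemma dim_le_pos_index:
  fixes U :: "'a::euclidean_space set"
  assumes "subspace U" "U \<subseteq> W" "posdef_on Q U"
  shows "dim U \<le> pos_index Q W"
  unfolding pos_index_eq_Max
  by (rule Max_ge[OF finite_dims_posdef_subspaces]) (use assms in blast)

lemma obtain_maximal_posdef_subspace:
  fixes W :: "'a::euclidean_space set"
  assumes "subspace W"
  obtains U where "subspace U" "U \<subseteq> W" "posdef_on Q U" "dim U = pos_index Q W"
proof -
  have "{0} \<subseteq> W" "posdef_on Q {0}"
    using subspace_0[OF assms] by (auto simp: posdef_on_def)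
  then have "{dim U | U. subspace U \<and> U \<subseteq> W \<and> posdef_on Q U} \<noteq> {}"
    using subspace_single_0 by blast
  from Max_in[OF finite_dims_posdef_subspaces this] show ?thesis
    using that unfolding pos_index_eq_Max by auto
qed

lemma pos_index_add_pos_index_neg_le_dim:
  fixes W :: "'a::euclidean_space set"
  assumes W: "subspace W"
  shows "pos_index Q W + pos_index (\<lambda>u. - Q u) W \<le> dim W"
proof -
  obtain U where U: "subspace U" "U \<subseteq> W" "posdef_on Q U" "dim U = pos_index Q W"
    using obtain_maximal_posdef_subspace[OF W] .
  obtain N where N: "subspace N" "N \<subseteq> W" "posdef_on (\<lambda>u. - Q u) N"
      "dim N = pos_index (\<lambda>u. - Q u) W"
    using obtain_maximal_posdef_subspace[OF W] .
  have "U \<inter> N \<subseteq> {0}"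
    using U(3) N(3) by (force simp: posdef_on_def)
  then have "dim (U \<inter> N) = 0"
    by simp
  then have "dim U + dim N = dim {x + y |x y. x \<in> U \<and> y \<in> N}"
    using dim_sums_Int[OF U(1) N(1)] by linarith
  also have "\<dots> \<le> dim W"
    using U(2) N(2) subspace_add[OF W] by (blast intro: dim_subset)
  finally show ?thesis
    using U(4) N(4) by simp
qed

lemma dim_le_pos_index_linear_image:
  fixes T :: "'a::euclidean_space \<Rightarrow> 'b::euclidean_space"
  assumes T: "linear T" and U: "subspace U" and TU: "T ` U \<subseteq> W"
    and Q0: "Q 0 = 0" and pos: "\<forall>u\<in>U. u \<noteq> 0 \<longrightarrow> 0 < Q (T u)"
  shows "dim U \<le> pos_index Q W"
proof -
  have "inj_on T U"
    using pos Q0 linear_inj_on_iff_eq_0[OF T U] by force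
  then have "dim (T ` U) = dim U"
    using dim_image_eq[OF T] span_eq_iff[THEN iffD2, OF U] by metis
  moreover have "posdef_on Q (T ` U)"
    using pos linear_0[OF T] by (auto simp: posdef_on_def)
  ultimately show ?thesis
    using dim_le_pos_index[OF linear_subspace_image[OF T U] TU] by simp
qed

lemma subspace_common_kernel:
  assumes "subspace S" "\<forall>b\<in>F. linear (g b)"
  shows "subspace {x\<in>S. \<forall>b\<in>F. g b x = 0}"
proof -
  have "{x\<in>S. \<forall>b\<in>F. g b x = 0} = S \<inter> (\<Inter>b\<in>F. {x. g b x = 0})"
    by auto
  then show ?thesis
    using assms by (simp add: subspace_inter subspace_Int linear_subspace_kernel)
qed

lemma dim_le_dim_kernel_Suc:
  fixes f :: "'a::euclidean_space \<Rightarrow> real"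
  assumes S: "subspace S" and f: "linear f"
  shows "dim S \<le> Suc (dim {x\<in>S. f x = 0})"
proof (cases "\<forall>x\<in>S. f x = 0")
  case True
  then have "{x\<in>S. f x = 0} = S"
    by blast
  then show ?thesis
    by simp
next
  case False
  then obtain s where s: "s \<in> S" "f s \<noteq> 0" by blast
  define K where "K = {x\<in>S. f x = 0}"
  have "x \<in> span (insert s K)" if x: "x \<in> S" for x
  proof -
    define c where "c = f x / f s"
    have "x - c *\<^sub>R s \<in> K"
      using x s S f by (simp add: K_def c_def subspace_diff subspace_scale linear_diff linear_scale)
    then have "(x - c *\<^sub>R s) + c *\<^sub>R s \<in> span (insert s K)"
      by (intro span_add span_scale) (auto intro: span_base)
    then show ?thesis by simp
  qed
  then have "dim S \<le> dim (insert s K)"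
    using dim_mono by blast
  also have "\<dots> \<le> Suc (dim K)"
    by (simp add: dim_insert)
  finally show ?thesis unfolding K_def .
qed

lemma dim_le_dim_common_kernel_add_card:
  fixes g :: "'b \<Rightarrow> 'a::euclidean_space \<Rightarrow> real"
  assumes "finite F" "subspace S" "\<forall>b\<in>F. linear (g b)"
  shows "dim S \<le> dim {x\<in>S. \<forall>b\<in>F. g b x = 0} + card F"
  using assms
proof (induction F rule: finite_induct)
  case empty
  then show ?case by simp
next
  case (insert a F)
  let ?K = "{x\<in>S. \<forall>b\<in>F. g b x = 0}"
  have "dim S \<le> dim ?K + card F"
    using insert by simp
  also have "dim ?K \<le> Suc (dim {x\<in>?K. g a x = 0})"
    using insert by (intro dim_le_dim_kernel_Suc subspace_common_kernel) auto
  also have "{x\<in>?K. g a x = 0} = {x\<in>S. \<forall>b\<in>insert a F. g b x = 0}"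
    by auto
  finally show ?case
    using insert by simp
qed

lemma dim_le_dim_bilinear_orthogonal_add_dim:
  fixes B :: "'a::euclidean_space \<Rightarrow> 'a \<Rightarrow> real"
  assumes B: "bilinear B" and W: "subspace W"
  shows "dim W \<le> dim {x\<in>W. \<forall>u\<in>U. B u x = 0} + dim U"
proof -
  obtain F where F: "F \<subseteq> U" "independent F" "U \<subseteq> span F" "card F = dim U"
    using basis_exists by blast
  have "B u x = 0" if "u \<in> U" "\<forall>b\<in>F. B b x = 0" for u x
    using linear_eq_0_on_span[of "\<lambda>u. B u x" F u] B F(3) that
    by (auto simp: bilinear_def)
  then have "{x\<in>W. \<forall>b\<in>F. B b x = 0} = {x\<in>W. \<forall>u\<in>U. B u x = 0}"
    using F(1) by blast
  moreover have "dim W \<le> dim {x\<in>W. \<forall>b\<in>F. B b x = 0} + card F"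
    using B finiteI_independent[OF F(2)]
    by (intro dim_le_dim_common_kernel_add_card W) (auto simp: bilinear_def)
  ultimately show ?thesis
    using F(4) by simp
qed

lemma sums_eq_if_Int_trivial:
  fixes W :: "'a::euclidean_space set"
  assumes "subspace U" "U \<subseteq> W" "subspace C" "C \<subseteq> W" "subspace W"
    and "U \<inter> C \<subseteq> {0}" "dim W \<le> dim C + dim U"
  shows "{u + c |u c. u \<in> U \<and> c \<in> C} = W"
proof (rule subspace_dim_equal)
  show "subspace {u + c |u c. u \<in> U \<and> c \<in> C}"
    using assms by (simp add: subspace_sums)
  show "{u + c |u c. u \<in> U \<and> c \<in> C} \<subseteq> W"
    using assms subspace_add[of W] by blast
  have "dim (U \<inter> C) = 0"
    using assms(6) by simp
  then show "dim W \<le> dim {u + c |u c. u \<in> U \<and> c \<in> C}"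
    using dim_sums_Int[of U C] assms by linarith
qed (use assms in simp)

lemma bilinear_diag_add_scaled:
  assumes B: "bilinear B" and sym: "\<And>x y. B x y = B y x"
  shows "B (u + k *\<^sub>R w) (u + k *\<^sub>R w) = B u u + 2 * k * B u w + k\<^sup>2 * B w w"
  using sym[of w u]
  by (simp add: bilinear_ladd[OF B] bilinear_radd[OF B] bilinear_lmul[OF B]
      bilinear_rmul[OF B] power2_eq_square algebra_simps)

lemma nonpos_on_orthogonal_of_maximal_posdef:
  fixes B :: "'a::euclidean_space \<Rightarrow> 'a \<Rightarrow> real"
  assumes B: "bilinear B" and sym: "\<And>x y. B x y = B y x" and W: "subspace W"
    and U: "subspace U" "U \<subseteq> W" "posdef_on (\<lambda>x. B x x) U"
      "dim U = pos_index (\<lambda>x. B x x) W"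
    and w: "w \<in> W" "\<forall>u\<in>U. B u w = 0"
  shows "B w w \<le> 0"
proof (rule ccontr)
  assume "\<not> B w w \<le> 0"
  then have pos: "0 < B w w" by simp
  have "w \<notin> span U"
    unfolding span_eq_iff[THEN iffD2, OF U(1)] using pos w(2) by auto
  then have "dim (span (insert w U)) = Suc (dim U)"
    by (simp add: dim_insert)
  moreover have "span (insert w U) \<subseteq> W"
    using U(2) w(1) span_minimal[OF _ W] by blast
  moreover have "posdef_on (\<lambda>x. B x x) (span (insert w U))"
    unfolding posdef_on_def
  proof (intro ballI impI)
    fix z assume "z \<in> span (insert w U)" "z \<noteq> 0"
    then obtain k where "z - k *\<^sub>R w \<in> U"
      unfolding span_insert span_eq_iff[THEN iffD2, OF U(1)] by blast
    define u where "u = z - k *\<^sub>R w"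
    have u: "u \<in> U" and z: "z = u + k *\<^sub>R w"
      using \<open>z - k *\<^sub>R w \<in> U\<close> by (simp_all add: u_def)
    have "B z z = B u u + k\<^sup>2 * B w w"
      using w(2) u by (simp add: z bilinear_diag_add_scaled[OF B sym])
    moreover have "u = 0 \<longrightarrow> B u u = 0 \<and> k \<noteq> 0"
      using \<open>z \<noteq> 0\<close> z bilinear_lzero[OF B] by auto
    moreover have "u \<noteq> 0 \<longrightarrow> 0 < B u u"
      using U(3) u by (simp add: posdef_on_def)
    moreover have "k \<noteq> 0 \<longrightarrow> 0 < k\<^sup>2 * B w w"
      using pos by simp
    ultimately show "0 < B z z"
      by (cases "u = 0"; cases "k = 0") auto
  qed
  ultimately have "Suc (dim U) \<le> pos_index (\<lambda>x. B x x) W"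
    using dim_le_pos_index[OF subspace_span] by metis
  then show False
    using U(4) by simp
qed

lemma isotropic_orthogonal_if_nonpos:
  fixes B :: "'a::euclidean_space \<Rightarrow> 'a \<Rightarrow> real"
  assumes B: "bilinear B" and sym: "\<And>x y. B x y = B y x" and C: "subspace C"
    and nonpos: "\<forall>v\<in>C. B v v \<le> 0" and w: "w \<in> C" "B w w = 0" and v: "v \<in> C"
  shows "B w v = 0"
proof -
  define b q where "b = B w v" and "q = B v v"
  \<comment> \<open>On w + s v with s = b / a the form equals b^2 (2 a + q) / a^2, and 2 a + q > 0.\<close>
  define a where "a = 1 + \<bar>q\<bar>"
  define s where "s = b / a"
  have "0 < a" "0 < 2 * a + q"
    by (auto simp: a_def)
  have "w + s *\<^sub>R v \<in> C"
    using C w(1) v by (simp add: subspace_add subspace_scale)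
  then have "B (w + s *\<^sub>R v) (w + s *\<^sub>R v) \<le> 0"
    using nonpos by blast
  then have "2 * s * b + s\<^sup>2 * q \<le> 0"
    using w(2) by (simp add: bilinear_diag_add_scaled[OF B sym] b_def q_def)
  also have "2 * s * b + s\<^sup>2 * q = b\<^sup>2 * (2 * a + q) / a\<^sup>2"
    using \<open>0 < a\<close> by (simp add: s_def power2_eq_square field_simps)
  finally have "b\<^sup>2 \<le> 0"
    using \<open>0 < a\<close> \<open>0 < 2 * a + q\<close> by (simp add: divide_le_0_iff mult_le_0_iff)
  then show ?thesis
    by (simp add: b_def)
qed

lemma dim_le_pos_index_add_neg_if_nondegenerate:
  fixes B :: "'a::euclidean_space \<Rightarrow> 'a \<Rightarrow> real"
  assumes B: "bilinear B" and sym: "\<And>x y. B x y = B y x" and W: "subspace W"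
    and nondeg: "\<And>w. w \<in> W \<Longrightarrow> \<forall>x\<in>W. B w x = 0 \<Longrightarrow> w = 0"
  shows "dim W \<le> pos_index (\<lambda>x. B x x) W + pos_index (\<lambda>x. - B x x) W"
proof -
  obtain U where U: "subspace U" "U \<subseteq> W" "posdef_on (\<lambda>x. B x x) U"
      "dim U = pos_index (\<lambda>x. B x x) W"
    using obtain_maximal_posdef_subspace[OF W] .
  define C where "C = {x\<in>W. \<forall>u\<in>U. B u x = 0}"
  have linB: "linear (B u)" for u
    using B by (simp add: bilinear_def)
  have C: "subspace C" "C \<subseteq> W"
    using subspace_common_kernel[OF W, of U B] linB by (auto simp: C_def)
  have dim_W: "dim W \<le> dim C + dim U"
    unfolding C_def by (rule dim_le_dim_bilinear_orthogonal_add_dim[OF B W])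
  have nonpos: "\<forall>v\<in>C. B v v \<le> 0"
    using nonpos_on_orthogonal_of_maximal_posdef[OF B sym W U] by (auto simp: C_def)
  have "U \<inter> C \<subseteq> {0}"
    using U(3) by (force simp: C_def posdef_on_def)
  then have sum_eq_W: "{u + c |u c. u \<in> U \<and> c \<in> C} = W"
    using sums_eq_if_Int_trivial[OF U(1,2) C(1,2) W _ dim_W] by blast
  have "posdef_on (\<lambda>x. - B x x) C"
    unfolding posdef_on_def
  proof (intro ballI impI)
    fix w assume w: "w \<in> C" "w \<noteq> 0"
    have "B w w \<noteq> 0"
    proof
      assume "B w w = 0"
      have "B w (u + c) = 0" if "u \<in> U" "c \<in> C" for u c
        using that w(1) isotropic_orthogonal_if_nonpos[OF B sym C(1) nonpos w(1) \<open>B w w = 0\<close>]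
        by (simp add: bilinear_radd[OF B] sym[of w u] C_def)
      then have "\<forall>x\<in>W. B w x = 0"
        using sum_eq_W by blast
      then show False
        using nondeg w C(2) by blast
    qed
    then show "0 < - B w w"
      using nonpos w(1) by force
  qed
  then have "dim C \<le> pos_index (\<lambda>x. - B x x) W"
    by (rule dim_le_pos_index[OF C])
  then show ?thesis
    using dim_W U(4) by linarith
qed

lemma bilinear_uminus: "bilinear B \<Longrightarrow> bilinear (\<lambda>x y. - B x y)"
  by (simp add: bilinear_def linear_iff)

lemma posdef_on_coercive:
  fixes B :: "'a::euclidean_space \<Rightarrow> 'a \<Rightarrow> real"
  assumes B: "bilinear B" and U: "subspace U" and pos: "posdef_on (\<lambda>x. B x x) U"
  obtains c where "0 < c" "\<And>u. u \<in> U \<Longrightarrow> c * (norm u)\<^sup>2 \<le> B u u"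
proof (cases "U \<subseteq> {0}")
  case True
  show ?thesis
  proof (rule that[of 1])
    fix u assume "u \<in> U"
    then have "u = 0"
      using True by blast
    then show "1 * (norm u)\<^sup>2 \<le> B u u"
      by (simp add: bilinear_lzero[OF B])
  qed simp
next
  case False
  then obtain u0 where "u0 \<in> U" "u0 \<noteq> 0" by blast
  define S where "S = U \<inter> sphere 0 1"
  have "u0 /\<^sub>R norm u0 \<in> S"
    using \<open>u0 \<in> U\<close> \<open>u0 \<noteq> 0\<close> subspace_scale[OF U] by (simp add: S_def)
  moreover have "compact S"
    unfolding S_def by (rule closed_Int_compact[OF closed_subspace[OF U] compact_sphere])
  moreover have "continuous_on S (\<lambda>x. B x x)"
    using bounded_bilinear.continuous_on[OF bilinear_conv_bounded_bilinear[THEN iffD1, OF B]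
        continuous_on_id continuous_on_id] .
  ultimately obtain x0 where x0: "x0 \<in> S" "\<And>y. y \<in> S \<Longrightarrow> B x0 x0 \<le> B y y"
    using continuous_attains_inf[of S "\<lambda>x. B x x"] by blast
  have "B x0 x0 * (norm u)\<^sup>2 \<le> B u u" if u: "u \<in> U" for u
  proof (cases "u = 0")
    case True
    then show ?thesis
      by (simp add: bilinear_lzero[OF B])
  next
    case False
    then have "u /\<^sub>R norm u \<in> S"
      using u subspace_scale[OF U] by (simp add: S_def)
    then have "B x0 x0 \<le> B (u /\<^sub>R norm u) (u /\<^sub>R norm u)"
      by (rule x0(2))
    also have "\<dots> = B u u / (norm u)\<^sup>2"
      by (simp add: bilinear_lmul[OF B] bilinear_rmul[OF B] power2_eq_square field_simps)
    finally show ?thesis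
      using False by (simp add: field_simps)
  qed
  moreover have "0 < B x0 x0"
    using x0(1) pos by (auto simp: S_def posdef_on_def)
  ultimately show ?thesis
    using that by blast
qed

lemma bilinear_diag_perturbation_bound:
  fixes B :: "'a::euclidean_space \<Rightarrow> 'a \<Rightarrow> real"
  assumes B: "bilinear B"
  obtains K where "0 < K" "\<And>u d. \<bar>B (u + d) (u + d) - B u u\<bar> \<le> K * norm d * (2 * norm u + norm d)"
proof -
  obtain K where K: "0 < K" "\<And>x y. \<bar>B x y\<bar> \<le> K * norm x * norm y"
    using bilinear_bounded_pos[OF B] by auto
  have "\<bar>B (u + d) (u + d) - B u u\<bar> \<le> K * norm d * (2 * norm u + norm d)" for u d
  proof -
    have "B (u + d) (u + d) - B u u = B u d + B d u + B d d"
      by (simp add: bilinear_ladd[OF B] bilinear_radd[OF B])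
    then have "\<bar>B (u + d) (u + d) - B u u\<bar> \<le> \<bar>B u d\<bar> + \<bar>B d u\<bar> + \<bar>B d d\<bar>"
      by linarith
    also have "\<dots> \<le> K * norm u * norm d + K * norm d * norm u + K * norm d * norm d"
      using K(2) by (intro add_mono) auto
    finally show ?thesis
      by (simp add: algebra_simps)
  qed
  then show ?thesis
    using that K(1) by blast
qed

lemma posdef_on_perturbation:
  fixes B :: "'a::euclidean_space \<Rightarrow> 'a \<Rightarrow> real"
  assumes B: "bilinear B" and U: "subspace U" and pos: "posdef_on (\<lambda>x. B x x) U"
  obtains \<delta> where "0 < \<delta>"
    "\<And>u d. u \<in> U \<Longrightarrow> u \<noteq> 0 \<Longrightarrow> norm d \<le> \<delta> * norm u \<Longrightarrow> 0 < B (u + d) (u + d)"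
proof -
  obtain c where c: "0 < c" "\<And>u. u \<in> U \<Longrightarrow> c * (norm u)\<^sup>2 \<le> B u u"
    using posdef_on_coercive[OF B U pos] by blast
  obtain K where K: "0 < K" "\<And>u d. \<bar>B (u + d) (u + d) - B u u\<bar> \<le> K * norm d * (2 * norm u + norm d)"
    using bilinear_diag_perturbation_bound[OF B] by blast
  define \<delta> where "\<delta> = min 1 (c / (6 * K))"
  have "0 < \<delta>" "\<delta> \<le> 1" "\<delta> \<le> c / (6 * K)"
    using c(1) K(1) by (auto simp: \<delta>_def)
  then have "6 * K * \<delta> \<le> c"
    using K(1) by (simp add: field_simps)
  have "0 < B (u + d) (u + d)" if u: "u \<in> U" "u \<noteq> 0" and d: "norm d \<le> \<delta> * norm u" for u d
  proof -
    have "\<delta> * norm u \<le> norm u"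
      using \<open>0 < \<delta>\<close> \<open>\<delta> \<le> 1\<close> by (intro mult_left_le_one_le) auto
    with d have "K * norm d * (2 * norm u + norm d) \<le> K * (\<delta> * norm u) * (3 * norm u)"
      using K(1) \<open>0 < \<delta>\<close> by (intro mult_mono) auto
    also have "\<dots> = (6 * K * \<delta>) / 2 * (norm u)\<^sup>2"
      by (simp add: power2_eq_square)
    also have "\<dots> \<le> c / 2 * (norm u)\<^sup>2"
      using \<open>6 * K * \<delta> \<le> c\<close> by (intro mult_right_mono) auto
    finally have "c / 2 * (norm u)\<^sup>2 \<le> B (u + d) (u + d)"
      using K(2)[of u d] c(2)[OF u(1)] by simp
    moreover have "0 < c / 2 * (norm u)\<^sup>2"
      using c(1) u(2) by simp
    ultimately show ?thesis
      by linarith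
  qed
  with \<open>0 < \<delta>\<close> show ?thesis
    using that by blast
qed

lemma pos_index_le_of_near_identity:
  fixes B :: "'a::euclidean_space \<Rightarrow> 'a \<Rightarrow> real"
  assumes B: "bilinear B" and W: "subspace W"
  obtains \<delta> where "0 < \<delta>"
    "\<And>W' T. linear T \<Longrightarrow> T ` W \<subseteq> W' \<Longrightarrow> \<forall>x\<in>W. norm (T x - x) \<le> \<delta> * norm x \<Longrightarrow>
      pos_index (\<lambda>x. B x x) W \<le> pos_index (\<lambda>x. B x x) W'"
proof -
  obtain U where U: "subspace U" "U \<subseteq> W" "posdef_on (\<lambda>x. B x x) U"
      "dim U = pos_index (\<lambda>x. B x x) W"
    using obtain_maximal_posdef_subspace[OF W] .
  obtain \<delta> where "0 < \<delta>" and \<delta>: "\<And>u d. u \<in> U \<Longrightarrow> u \<noteq> 0 \<Longrightarrow> norm d \<le> \<delta> * norm u \<Longrightarrow>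
      0 < B (u + d) (u + d)"
    using posdef_on_perturbation[OF B U(1,3)] by blast
  show ?thesis
  proof (rule that)
    show "0 < \<delta>" by fact
    fix W' T
    assume T: "linear T" "T ` W \<subseteq> W'" and close: "\<forall>x\<in>W. norm (T x - x) \<le> \<delta> * norm x"
    have "0 < B (T u) (T u)" if "u \<in> U" "u \<noteq> 0" for u
      using \<delta>[OF that, of "T u - u"] close U(2) that by auto
    moreover have "T ` U \<subseteq> W'"
      using U(2) T(2) by blast
    ultimately show "pos_index (\<lambda>x. B x x) W \<le> pos_index (\<lambda>x. B x x) W'"
      using dim_le_pos_index_linear_image[OF T(1) U(1), of W' "\<lambda>x. B x x"] U(4)
      by (simp add: bilinear_lzero[OF B])
  qed
qed

lemma signature_eq_of_near_identity:
  fixes B :: "'a::euclidean_space \<Rightarrow> 'a \<Rightarrow> real"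
  assumes B: "bilinear B" and sym: "\<And>x y. B x y = B y x" and W: "subspace W"
    and nondeg: "\<And>w. w \<in> W \<Longrightarrow> \<forall>x\<in>W. B w x = 0 \<Longrightarrow> w = 0"
  obtains \<delta> where "0 < \<delta>"
    "\<And>W' T. subspace W' \<Longrightarrow> dim W' = dim W \<Longrightarrow> linear T \<Longrightarrow> T ` W \<subseteq> W' \<Longrightarrow>
      \<forall>x\<in>W. norm (T x - x) \<le> \<delta> * norm x \<Longrightarrow> signature (\<lambda>x. B x x) W' = signature (\<lambda>x. B x x) W"
proof -
  obtain \<delta>\<^sub>p where "0 < \<delta>\<^sub>p" and pos: "\<And>W' T. linear T \<Longrightarrow> T ` W \<subseteq> W' \<Longrightarrow>
      \<forall>x\<in>W. norm (T x - x) \<le> \<delta>\<^sub>p * norm x \<Longrightarrow> pos_index (\<lambda>x. B x x) W \<le> pos_index (\<lambda>x. B x x) W'"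
    using pos_index_le_of_near_identity[OF B W] by blast
  obtain \<delta>\<^sub>n where "0 < \<delta>\<^sub>n" and neg: "\<And>W' T. linear T \<Longrightarrow> T ` W \<subseteq> W' \<Longrightarrow>
      \<forall>x\<in>W. norm (T x - x) \<le> \<delta>\<^sub>n * norm x \<Longrightarrow> pos_index (\<lambda>x. - B x x) W \<le> pos_index (\<lambda>x. - B x x) W'"
    using pos_index_le_of_near_identity[OF bilinear_uminus[OF B] W] by blast
  show ?thesis
  proof (rule that)
    show "0 < min \<delta>\<^sub>p \<delta>\<^sub>n"
      using \<open>0 < \<delta>\<^sub>p\<close> \<open>0 < \<delta>\<^sub>n\<close> by simp
    fix W' T
    assume W': "subspace W'" "dim W' = dim W" and T: "linear T" "T ` W \<subseteq> W'"
      and close: "\<forall>x\<in>W. norm (T x - x) \<le> min \<delta>\<^sub>p \<delta>\<^sub>n * norm x"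
    have "min \<delta>\<^sub>p \<delta>\<^sub>n * norm x \<le> \<delta>\<^sub>p * norm x" "min \<delta>\<^sub>p \<delta>\<^sub>n * norm x \<le> \<delta>\<^sub>n * norm x" for x :: 'a
      by (simp_all add: mult_right_mono)
    then have "\<forall>x\<in>W. norm (T x - x) \<le> \<delta>\<^sub>p * norm x" "\<forall>x\<in>W. norm (T x - x) \<le> \<delta>\<^sub>n * norm x"
      using close by (meson order_trans)+
    then have "pos_index (\<lambda>x. B x x) W \<le> pos_index (\<lambda>x. B x x) W'"
      "pos_index (\<lambda>x. - B x x) W \<le> pos_index (\<lambda>x. - B x x) W'"
      using pos[OF T] neg[OF T] by auto
    moreover have "pos_index (\<lambda>x. B x x) W' + pos_index (\<lambda>x. - B x x) W' \<le> dim W'"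
      by (rule pos_index_add_pos_index_neg_le_dim[OF W'(1)])
    moreover have "dim W \<le> pos_index (\<lambda>x. B x x) W + pos_index (\<lambda>x. - B x x) W"
      by (rule dim_le_pos_index_add_neg_if_nondegenerate[OF B sym W nondeg])
    ultimately show "signature (\<lambda>x. B x x) W' = signature (\<lambda>x. B x x) W"
      using W'(2) by (simp add: signature_def)
  qed
qed

section \<open>Linear approximation in the gap metric\<close>

lemma norm_Pair_le_scaled:
  assumes "norm a' \<le> \<delta> * norm a" "norm b' \<le> \<delta> * norm b" "0 \<le> \<delta>"
  shows "norm (a', b') \<le> \<delta> * norm (a, b)"
proof -
  have "(norm a')\<^sup>2 + (norm b')\<^sup>2 \<le> (\<delta> * norm a)\<^sup>2 + (\<delta> * norm b)\<^sup>2"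
    using assms by (intro add_mono power_mono) auto
  then have "sqrt ((norm a')\<^sup>2 + (norm b')\<^sup>2) \<le> sqrt (\<delta>\<^sup>2 * ((norm a)\<^sup>2 + (norm b)\<^sup>2))"
    by (simp add: power_mult_distrib distrib_left)
  then show ?thesis
    using assms(3) by (simp add: norm_Pair real_sqrt_mult)
qed

lemma linear_map_prod: "linear f \<Longrightarrow> linear g \<Longrightarrow> linear (map_prod f g)"
  by (simp add: linear_iff)

lemma obtain_orthogonal_projection:
  fixes S :: "'a::euclidean_space set"
  assumes S: "subspace S"
  obtains P where "linear P" "\<And>x. P x \<in> S" "\<And>x s. s \<in> S \<Longrightarrow> norm (x - P x) \<le> norm (x - s)"
proof -
  obtain T where T: "pairwise orthogonal T" "span T = S"
    using orthogonal_basis_subspace[OF S] span_eq_iff[THEN iffD2, OF S] by metis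
  define P where "P x = (\<Sum>b\<in>T. (b \<bullet> x / (b \<bullet> b)) *\<^sub>R b)" for x
  have "linear P"
    unfolding P_def
    by (intro linearI) (simp_all add: inner_add_right add_divide_distrib scaleR_add_left
        sum.distrib scaleR_sum_right)
  moreover have PS: "P x \<in> S" for x
    unfolding P_def T(2)[symmetric] by (intro span_sum span_mul span_base)
  moreover have "norm (x - P x) \<le> norm (x - s)" if s: "s \<in> S" for x s
  proof -
    have "orthogonal (P x - s) (x - P x)"
      using Gram_Schmidt_step[OF T(1), of "P x - s" x] PS[of x] s subspace_diff[OF S] T(2)
      by (simp add: P_def)
    then have "(norm (x - s))\<^sup>2 = (norm (x - P x))\<^sup>2 + (norm (P x - s))\<^sup>2"
      using norm_add_Pythagorean[of "x - P x" "P x - s"] orthogonal_commute by fastforce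
    then have "(norm (x - P x))\<^sup>2 \<le> (norm (x - s))\<^sup>2"
      by simp
    then show ?thesis
      by (rule power2_le_imp_le) simp
  qed
  ultimately show ?thesis
    using that by blast
qed

lemma infdist_le_gdist:
  fixes L M :: "'n::finite sympl set"
  assumes M: "subspace M" and v: "v \<in> L" "norm v \<le> 1"
  shows "infdist v M \<le> gdist M L"
proof -
  have "infdist u M \<le> 1" if "u \<in> L \<inter> cball 0 1" for u
    using infdist_le[OF subspace_0[OF M], of u] that by simp
  then have "infdist v M \<le> (SUP u\<in>L \<inter> cball 0 1. infdist u M)"
    using v by (intro cSUP_upper bdd_aboveI2) auto
  then show ?thesis
    unfolding gdist_def by simp
qed

lemma norm_diff_le_infdist_of_closest:
  assumes "s0 \<in> S" "\<And>s. s \<in> S \<Longrightarrow> norm (x - s0) \<le> norm (x - s)"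
  shows "norm (x - s0) \<le> infdist x S"
  using assms unfolding infdist_def
  by (auto intro!: cINF_greatest simp: dist_norm)

lemma norm_projection_diff_le_gdist:
  fixes L M :: "'n::finite sympl set"
  assumes L: "subspace L" and M: "subspace M" and P: "linear P" "\<And>x. P x \<in> M"
    and closest: "\<And>x s. s \<in> M \<Longrightarrow> norm (x - P x) \<le> norm (x - s)"
    and "gdist M L < r" and x: "x \<in> L"
  shows "norm (P x - x) \<le> r * norm x"
proof (cases "x = 0")
  case True
  then show ?thesis
    using linear_0[OF P(1)] by simp
next
  case False
  define v where "v = x /\<^sub>R norm x"
  have "v \<in> L" "norm v = 1"
    using x False subspace_scale[OF L] by (auto simp: v_def)
  have "norm (v - P v) \<le> infdist v M"
    using P(2) closest by (rule norm_diff_le_infdist_of_closest)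
  also have "\<dots> \<le> gdist M L"
    using infdist_le_gdist[OF M \<open>v \<in> L\<close>] \<open>norm v = 1\<close> by simp
  finally have "norm (v - P v) < r"
    using \<open>gdist M L < r\<close> by simp
  have "P x - x = norm x *\<^sub>R (P v - v)"
    using False linear_scale[OF P(1), of "norm x" v] by (simp add: v_def scaleR_diff_right)
  then have "norm (P x - x) = norm x * norm (v - P v)"
    by (simp add: norm_minus_commute)
  also have "\<dots> \<le> norm x * r"
    using \<open>norm (v - P v) < r\<close> by (simp add: mult_left_mono)
  finally show ?thesis
    by (simp add: mult.commute)
qed

lemma obtain_linear_near_identity_gdist:
  fixes L M :: "'n::finite sympl set"
  assumes L: "subspace L" and M: "subspace M" and "gdist M L < \<delta>"
  obtains P where "linear P" "range P \<subseteq> M" "\<forall>x\<in>L. norm (P x - x) \<le> \<delta> * norm x"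
proof -
  obtain P where P: "linear P" "\<And>x. P x \<in> M" "\<And>x s. s \<in> M \<Longrightarrow> norm (x - P x) \<le> norm (x - s)"
    using obtain_orthogonal_projection[OF M] by blast
  then show ?thesis
    using norm_projection_diff_le_gdist[OF L M P \<open>gdist M L < \<delta>\<close>] that by blast
qed

section \<open>Lagrangians and the Maslov form\<close>

lemma bilinear_omega: "bilinear omega"
  by (auto simp: bilinear_def omega_def intro!: linearI simp: inner_add_left inner_add_right algebra_simps)

lemma omega_swap: "omega u v = - omega v u"
  by (simp add: omega_def inner_commute)

lemma omega_0_left [simp]: "omega 0 v = 0"
  and omega_0_right [simp]: "omega v 0 = 0"
  by (simp_all add: omega_def)

definition symp_J :: "'n::finite sympl \<Rightarrow> 'n sympl" where
  "symp_J v = (snd v, - fst v)"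

lemma omega_eq_inner_symp_J: "omega u v = u \<bullet> symp_J v"
  by (cases u) (simp add: omega_def symp_J_def inner_Pair)

lemma linear_symp_J: "linear symp_J"
  by (rule linearI) (simp_all add: symp_J_def)

lemma inj_symp_J: "inj symp_J"
  by (rule injI) (simp add: symp_J_def prod_eq_iff)

lemma subspace_lagrangian: "L \<in> lagrangians \<Longrightarrow> subspace L"
  by (simp add: lagrangians_def)

lemma mem_lagrangian_if_omega_orthogonal:
  fixes L :: "'n::finite sympl set"
  assumes L: "L \<in> lagrangians" and v: "\<forall>y\<in>L. omega y v = 0"
  shows "v \<in> L"
proof -
  have sL: "subspace L" and dL: "dim L = CARD('n)" and iso: "\<forall>u\<in>L. \<forall>w\<in>L. omega u w = 0"
    using L by (auto simp: lagrangians_def)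
  define L\<^sub>\<omega> where "L\<^sub>\<omega> = {x. \<forall>y\<in>L. omega y x = 0}"
  define L\<^sub>o where "L\<^sub>o = {x. \<forall>y\<in>L. orthogonal y x}"
  have "\<forall>y\<in>L. linear (omega y)"
    using bilinear_omega unfolding bilinear_def by blast
  then have "subspace L\<^sub>\<omega>"
    using subspace_common_kernel[OF subspace_UNIV] by (simp add: L\<^sub>\<omega>_def)
  have "dim L\<^sub>o + dim L = 2 * CARD('n)"
    using dim_subspace_orthogonal_to_vectors[OF sL subspace_UNIV subset_UNIV]
    by (simp add: L\<^sub>o_def)
  moreover have "symp_J ` L\<^sub>\<omega> \<subseteq> L\<^sub>o"
    by (auto simp: L\<^sub>\<omega>_def L\<^sub>o_def orthogonal_def omega_eq_inner_symp_J)
  then have "dim (symp_J ` L\<^sub>\<omega>) \<le> dim L\<^sub>o"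
    by (rule dim_subset)
  moreover have "dim (symp_J ` L\<^sub>\<omega>) = dim L\<^sub>\<omega>"
    using dim_image_eq[OF linear_symp_J] inj_symp_J by (meson inj_on_subset subset_UNIV)
  ultimately have "dim L\<^sub>\<omega> \<le> dim L"
    using dL by simp
  moreover have "L \<subseteq> L\<^sub>\<omega>"
    using iso by (auto simp: L\<^sub>\<omega>_def)
  ultimately have "L = L\<^sub>\<omega>"
    using subspace_dim_equal[OF sL \<open>subspace L\<^sub>\<omega>\<close>] by blast
  moreover have "v \<in> L\<^sub>\<omega>"
    using v by (simp add: L\<^sub>\<omega>_def)
  ultimately show ?thesis
    by simp
qed

lemma diff_mem_lagrangian:
  assumes L: "L \<in> lagrangians" and orth: "\<And>y. y \<in> L \<Longrightarrow> omega y a + omega b y = 0"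
  shows "a - b \<in> L"
proof (rule mem_lagrangian_if_omega_orthogonal[OF L], intro ballI)
  fix y assume "y \<in> L"
  then have "omega y a - omega y b = 0"
    using orth[of y] omega_swap[of b y] by simp
  then show "omega y (a - b) = 0"
    by (simp add: bilinear_rsub[OF bilinear_omega])
qed

lemma transverse_eq_0: "transverse L M \<Longrightarrow> x \<in> L \<Longrightarrow> x \<in> M \<Longrightarrow> x = 0"
  by (auto simp: transverse_def)

definition maslov_bilinear ::
    "'n::finite sympl \<times> 'n sympl \<times> 'n sympl \<Rightarrow> 'n sympl \<times> 'n sympl \<times> 'n sympl \<Rightarrow> real" where
  "maslov_bilinear = (\<lambda>(x1, x2, x3) (y1, y2, y3).
     (omega x1 y2 + omega y1 x2 + omega x2 y3 + omega y2 x3 + omega x3 y1 + omega y3 x1) / 2)"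

lemma maslov_bilinear_simp:
  "maslov_bilinear (x1, x2, x3) (y1, y2, y3) =
     (omega x1 y2 + omega y1 x2 + omega x2 y3 + omega y2 x3 + omega x3 y1 + omega y3 x1) / 2"
  by (simp add: maslov_bilinear_def)

lemma beta_n_eq_signature_maslov:
  "beta_n L1 L2 L3 = signature (\<lambda>x. maslov_bilinear x x) (L1 \<times> L2 \<times> L3)"
  unfolding beta_n_def
  by (rule arg_cong[where f = "\<lambda>Q. signature Q (L1 \<times> L2 \<times> L3)"])
    (auto simp: maslov_bilinear_simp)

lemma maslov_bilinear_commute: "maslov_bilinear x y = maslov_bilinear y x"
  by (cases x; cases y) (simp add: maslov_bilinear_simp algebra_simps)

lemma bilinear_maslov: "bilinear maslov_bilinear"
proof -
  have "linear (maslov_bilinear x)" for x :: "'a::finite sympl \<times> 'a sympl \<times> 'a sympl"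
  proof (rule linearI)
    fix y z :: "'a::finite sympl \<times> 'a sympl \<times> 'a sympl" and c :: real
    show "maslov_bilinear x (y + z) = maslov_bilinear x y + maslov_bilinear x z"
      by (simp add: maslov_bilinear_def case_prod_beta bilinear_ladd[OF bilinear_omega]
          bilinear_radd[OF bilinear_omega] add_divide_distrib)
    show "maslov_bilinear x (c *\<^sub>R y) = c *\<^sub>R maslov_bilinear x y"
      by (simp add: maslov_bilinear_def case_prod_beta bilinear_lmul[OF bilinear_omega]
          bilinear_rmul[OF bilinear_omega] algebra_simps)
  qed
  then show ?thesis
    by (simp add: bilinear_def maslov_bilinear_commute[of _ "_ :: _ \<times> _"])
qed

lemma maslov_nondegenerate:
  assumes L: "L1 \<in> lagrangians" "L2 \<in> lagrangians" "L3 \<in> lagrangians"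
    and tr: "transverse L1 L2" "transverse L2 L3" "transverse L1 L3"
    and w: "w \<in> L1 \<times> L2 \<times> L3" "\<forall>x\<in>L1 \<times> L2 \<times> L3. maslov_bilinear w x = 0"
  shows "w = 0"
proof -
  obtain x1 x2 x3 where w_eq: "w = (x1, x2, x3)"
    using prod_cases3 by blast
  have S: "subspace L1" "subspace L2" "subspace L3"
    using L by (simp_all add: subspace_lagrangian)
  have x: "x1 \<in> L1" "x2 \<in> L2" "x3 \<in> L3" and z: "0 \<in> L1" "0 \<in> L2" "0 \<in> L3"
    using w(1) subspace_0[OF S(1)] subspace_0[OF S(2)] subspace_0[OF S(3)] by (auto simp: w_eq)
  have a1: "x2 - x3 \<in> L1"
  proof (rule diff_mem_lagrangian[OF L(1)])
    fix y assume "y \<in> L1"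
    then have "maslov_bilinear w (y, 0, 0) = 0"
      using w(2) z by blast
    then show "omega y x2 + omega x3 y = 0"
      by (simp add: w_eq maslov_bilinear_simp)
  qed
  have a2: "x3 - x1 \<in> L2"
  proof (rule diff_mem_lagrangian[OF L(2)])
    fix y assume "y \<in> L2"
    then have "maslov_bilinear w (0, y, 0) = 0"
      using w(2) z by blast
    then show "omega y x3 + omega x1 y = 0"
      by (simp add: w_eq maslov_bilinear_simp)
  qed
  have a3: "x1 - x2 \<in> L3"
  proof (rule diff_mem_lagrangian[OF L(3)])
    fix y assume "y \<in> L3"
    then have "maslov_bilinear w (0, 0, y) = 0"
      using w(2) z by blast
    then show "omega y x1 + omega x2 y = 0"
      by (simp add: w_eq maslov_bilinear_simp)
  qed
  \<comment> \<open>x1 + x2 - x3 lies in L1 and in L2, and then 2 x1 = x3 + (x1 - x2) lies in L1 and in L3.\<close>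
  have "x1 + (x2 - x3) \<in> L1"
    using subspace_add[OF S(1) x(1) a1] .
  moreover have "x1 + (x2 - x3) \<in> L2"
    using subspace_neg[OF S(2) subspace_diff[OF S(2) a2 x(2)]] by (simp add: algebra_simps)
  ultimately have "x1 + (x2 - x3) = 0"
    by (rule transverse_eq_0[OF tr(1)])
  then have "x3 = x1 + x2"
    by (simp add: algebra_simps)
  then have "x1 = (1/2) *\<^sub>R (x3 + (x1 - x2))"
    by (simp add: algebra_simps flip: scaleR_add_left)
  then have "x1 \<in> L3"
    using subspace_scale[OF S(3) subspace_add[OF S(3) x(3) a3]] by metis
  then have "x1 = 0"
    using transverse_eq_0[OF tr(3) x(1)] by blast
  then have "x2 = 0"
    using transverse_eq_0[OF tr(2) x(2)] subspace_neg[OF S(3) a3] by simp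
  then show ?thesis
    using \<open>x1 = 0\<close> \<open>x3 = x1 + x2\<close> by (simp add: w_eq zero_prod_def)
qed

lemma subspace_dim_lagrangian_triple:
  fixes L1 L2 L3 :: "'n::finite sympl set"
  assumes "L1 \<in> lagrangians" "L2 \<in> lagrangians" "L3 \<in> lagrangians"
  shows "subspace (L1 \<times> L2 \<times> L3)" "dim (L1 \<times> L2 \<times> L3) = 3 * CARD('n)"
  using assms by (auto simp: lagrangians_def subspace_Times dim_Times)

lemma beta_n_locally_constant:
  fixes L1 L2 L3 :: "'n::finite sympl set"
  assumes L: "L1 \<in> lagrangians" "L2 \<in> lagrangians" "L3 \<in> lagrangians"
    and tr: "transverse L1 L2" "transverse L2 L3" "transverse L1 L3"
  obtains \<delta> where "0 < \<delta>"
    "\<And>M1 M2 M3. M1 \<in> lagrangians \<Longrightarrow> M2 \<in> lagrangians \<Longrightarrow> M3 \<in> lagrangians \<Longrightarrow>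
      gdist M1 L1 < \<delta> \<Longrightarrow> gdist M2 L2 < \<delta> \<Longrightarrow> gdist M3 L3 < \<delta> \<Longrightarrow>
      beta_n M1 M2 M3 = beta_n L1 L2 L3"
proof -
  note W = subspace_dim_lagrangian_triple[OF L]
  obtain \<delta> where "0 < \<delta>" and \<delta>: "\<And>W' T. subspace W' \<Longrightarrow> dim W' = dim (L1 \<times> L2 \<times> L3) \<Longrightarrow>
      linear T \<Longrightarrow> T ` (L1 \<times> L2 \<times> L3) \<subseteq> W' \<Longrightarrow>
      \<forall>x\<in>L1 \<times> L2 \<times> L3. norm (T x - x) \<le> \<delta> * norm x \<Longrightarrow>
      signature (\<lambda>x. maslov_bilinear x x) W' = signature (\<lambda>x. maslov_bilinear x x) (L1 \<times> L2 \<times> L3)"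
    using signature_eq_of_near_identity[OF bilinear_maslov maslov_bilinear_commute W(1)]
      maslov_nondegenerate[OF L tr] by blast
  show ?thesis
  proof (rule that)
    show "0 < \<delta>" by fact
    fix M1 M2 M3
    assume M: "M1 \<in> lagrangians" "M2 \<in> lagrangians" "M3 \<in> lagrangians"
      and close: "gdist M1 L1 < \<delta>" "gdist M2 L2 < \<delta>" "gdist M3 L3 < \<delta>"
    obtain P1 where P1: "linear P1" "range P1 \<subseteq> M1" "\<forall>x\<in>L1. norm (P1 x - x) \<le> \<delta> * norm x"
      using obtain_linear_near_identity_gdist subspace_lagrangian L(1) M(1) close(1) by metis
    obtain P2 where P2: "linear P2" "range P2 \<subseteq> M2" "\<forall>x\<in>L2. norm (P2 x - x) \<le> \<delta> * norm x"
      using obtain_linear_near_identity_gdist subspace_lagrangian L(2) M(2) close(2) by metis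
    obtain P3 where P3: "linear P3" "range P3 \<subseteq> M3" "\<forall>x\<in>L3. norm (P3 x - x) \<le> \<delta> * norm x"
      using obtain_linear_near_identity_gdist subspace_lagrangian L(3) M(3) close(3) by metis
    define T where "T = map_prod P1 (map_prod P2 P3)"
    have "linear T"
      unfolding T_def using P1(1) P2(1) P3(1) by (intro linear_map_prod)
    moreover have "T ` (L1 \<times> L2 \<times> L3) \<subseteq> M1 \<times> M2 \<times> M3"
      using P1(2) P2(2) P3(2) by (auto simp: T_def)
    moreover have "\<forall>x\<in>L1 \<times> L2 \<times> L3. norm (T x - x) \<le> \<delta> * norm x"
      using P1(3) P2(3) P3(3) \<open>0 < \<delta>\<close> by (auto simp: T_def intro!: norm_Pair_le_scaled)
    moreover note M' = subspace_dim_lagrangian_triple[OF M]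
    ultimately show "beta_n M1 M2 M3 = beta_n L1 L2 L3"
      unfolding beta_n_eq_signature_maslov using \<delta>[OF M'(1)] W(2) by simp
  qed
qed

section \<open>Orientation of triples on the circle\<close>

lemma sin_add_sin_sub_sin_add:
  fixes u v :: real
  shows "sin u + sin v - sin (u + v) = 4 * sin (u / 2) * sin (v / 2) * sin ((u + v) / 2)"
proof -
  have "sin (u + v) = 2 * sin ((u + v) / 2) * cos ((u + v) / 2)"
    using sin_double[of "(u + v) / 2"] by (simp only: mult_2 field_sum_of_halves)
  moreover have "cos ((u - v) / 2) - cos ((u + v) / 2) = 2 * sin (u / 2) * sin (v / 2)"
    by (simp add: cos_diff_cos add_divide_distrib diff_divide_distrib)
  ultimately show ?thesis
    by (simp add: sin_plus_sin algebra_simps)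
qed

text \<open>Twice the signed area of the triangle x y z.\<close>

definition orientation :: "complex \<Rightarrow> complex \<Rightarrow> complex \<Rightarrow> real" where
  "orientation x y z = Im (cnj x * y + cnj y * z + cnj z * x)"

lemma orientation_cis: "orientation (cis a) (cis b) (cis c) = sin (b - a) + sin (c - b) + sin (a - c)"
  by (simp add: orientation_def cis_cnj cis_mult)

lemma orientation_swap: "orientation x z y = - orientation x y z"
  by (simp add: orientation_def algebra_simps)

lemma orientation_degenerate:
  assumes "x = y \<or> y = z \<or> x = z"
  shows "orientation x y z = 0"
  using assms by (auto simp: orientation_def algebra_simps)

lemma orientation_pos_if_pos_cyclic: "pos_cyclic x y z \<Longrightarrow> 0 < orientation x y z"
proof -
  assume "pos_cyclic x y z"
  then obtain a b c where abc: "x = cis a" "y = cis b" "z = cis c" "a < b" "b < c" "c < a + 2 * pi"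
    unfolding pos_cyclic_def by blast
  have "orientation x y z = sin (b - a) + sin (c - b) - sin ((b - a) + (c - b))"
    using sin_minus[of "c - a"] by (simp add: abc orientation_cis)
  also have "\<dots> = 4 * sin ((b - a) / 2) * sin ((c - b) / 2) * sin ((c - a) / 2)"
    using sin_add_sin_sub_sin_add[of "b - a" "c - b"] by simp
  also have "\<dots> > 0"
    using abc by (intro mult_pos_pos sin_gt_zero) auto
  finally show ?thesis .
qed

lemma cis_Arg_circle:
  assumes "x \<in> circle"
  shows "cis (Arg x) = x"
proof -
  have "cmod x = 1"
    using assms by (simp add: circle_def)
  then have "x \<noteq> 0"
    by auto
  then show ?thesis
    using cis_Arg[of x] \<open>cmod x = 1\<close> by (simp add: sgn_div_norm)
qed

lemma obtain_cis_in_period: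
  fixes a b :: real
  obtains t where "a \<le> t" "t < a + 2 * pi" "cis t = cis b"
proof -
  define k where "k = \<lfloor>(b - a) / (2 * pi)\<rfloor>"
  have "of_int k \<le> (b - a) / (2 * pi)" "(b - a) / (2 * pi) < of_int k + 1"
    unfolding k_def by linarith+
  then have "a \<le> b - 2 * pi * of_int k" "b - 2 * pi * of_int k < a + 2 * pi"
    by (simp_all add: field_simps)
  moreover have "cis (2 * pi * of_int k) = 1"
    by (rule cis_multiple_2pi) simp
  then have "cis (b - 2 * pi * of_int k) = cis b"
    by (simp add: cis_divide[symmetric])
  ultimately show ?thesis
    using that by blast
qed

lemma pos_cyclic_or_pos_cyclic_swap:
  assumes "x \<in> circle" "y \<in> circle" "z \<in> circle" "x \<noteq> y" "y \<noteq> z" "x \<noteq> z"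
  shows "pos_cyclic x y z \<or> pos_cyclic x z y"
proof -
  define a where "a = Arg x"
  obtain b where b: "a \<le> b" "b < a + 2 * pi" "cis b = y"
    using obtain_cis_in_period[of a "Arg y"] cis_Arg_circle[OF assms(2)] by metis
  obtain c where c: "a \<le> c" "c < a + 2 * pi" "cis c = z"
    using obtain_cis_in_period[of a "Arg z"] cis_Arg_circle[OF assms(3)] by metis
  have x: "x = cis a"
    using cis_Arg_circle[OF assms(1)] by (simp add: a_def)
  have "a \<noteq> b" "a \<noteq> c" "b \<noteq> c"
    using assms(4-6) b(3) c(3) x by auto
  then consider "a < b" "b < c" | "a < c" "c < b"
    using b(1) c(1) by linarith
  then show ?thesis
  proof cases
    case 1
    then have "pos_cyclic x y z"
      unfolding pos_cyclic_def using x b(3) c(2,3) by blast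
    then show ?thesis ..
  next
    case 2
    then have "pos_cyclic x z y"
      unfolding pos_cyclic_def using x b(2,3) c(3) by blast
    then show ?thesis ..
  qed
qed

lemma beta_1_eq_sgn_orientation:
  assumes "x \<in> circle" "y \<in> circle" "z \<in> circle" "orientation x y z \<noteq> 0"
  shows "real_of_int (beta_1 x y z) = sgn (orientation x y z)"
proof -
  have "x \<noteq> y" "y \<noteq> z" "x \<noteq> z"
    using assms(4) orientation_degenerate by blast+
  then consider "pos_cyclic x y z" | "\<not> pos_cyclic x y z" "pos_cyclic x z y"
    using pos_cyclic_or_pos_cyclic_swap[OF assms(1-3)] by blast
  then show ?thesis
  proof cases
    case 1
    then show ?thesis
      using orientation_pos_if_pos_cyclic by (simp add: beta_1_def)
  next
    case 2
    then have "orientation x y z < 0"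
      using orientation_pos_if_pos_cyclic[of x z y] orientation_swap[of x y z] by linarith
    with 2 show ?thesis
      by (simp add: beta_1_def)
  qed
qed

lemma orientation_neq_0:
  assumes "x \<in> circle" "y \<in> circle" "z \<in> circle" "x \<noteq> y" "y \<noteq> z" "x \<noteq> z"
  shows "orientation x y z \<noteq> 0"
  using pos_cyclic_or_pos_cyclic_swap[OF assms] orientation_pos_if_pos_cyclic orientation_swap[of x y z]
  by force

lemma norm_cnj_mult_diff_le:
  assumes "cmod a = 1" "cmod b' = 1"
  shows "cmod (cnj a' * b' - cnj a * b) \<le> cmod (a' - a) + cmod (b' - b)"
proof -
  have "cnj a' * b' - cnj a * b = cnj (a' - a) * b' + cnj a * (b' - b)"
    by (simp add: algebra_simps)
  then have "cmod (cnj a' * b' - cnj a * b) \<le> cmod (cnj (a' - a) * b') + cmod (cnj a * (b' - b))"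
    by (metis norm_triangle_ineq)
  also have "\<dots> = cmod (a' - a) + cmod (b' - b)"
    using assms by (simp add: norm_mult flip: complex_cnj_diff)
  finally show ?thesis .
qed

lemma abs_orientation_diff_le:
  assumes "x \<in> circle" "y \<in> circle" "z \<in> circle" "x' \<in> circle" "y' \<in> circle" "z' \<in> circle"
  shows "\<bar>orientation x' y' z' - orientation x y z\<bar> \<le> 2 * (dist x' x + dist y' y + dist z' z)"
proof -
  have n: "cmod x = 1" "cmod y = 1" "cmod z = 1" "cmod x' = 1" "cmod y' = 1" "cmod z' = 1"
    using assms by (simp_all add: circle_def)
  have "orientation x' y' z' - orientation x y z =
      Im ((cnj x' * y' - cnj x * y) + (cnj y' * z' - cnj y * z) + (cnj z' * x' - cnj z * x))"
    by (simp add: orientation_def)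
  also have "\<bar>\<dots>\<bar> \<le> cmod ((cnj x' * y' - cnj x * y) + (cnj y' * z' - cnj y * z) + (cnj z' * x' - cnj z * x))"
    by (rule abs_Im_le_cmod)
  also have "\<dots> \<le> cmod (cnj x' * y' - cnj x * y) + cmod (cnj y' * z' - cnj y * z) + cmod (cnj z' * x' - cnj z * x)"
    by (intro norm_triangle_le add_mono order_refl)
  also have "\<dots> \<le> (cmod (x' - x) + cmod (y' - y)) + (cmod (y' - y) + cmod (z' - z)) + (cmod (z' - z) + cmod (x' - x))"
    using n by (intro add_mono norm_cnj_mult_diff_le)
  finally show ?thesis
    by (simp add: dist_norm)
qed

lemma sgn_eq_if_abs_diff_less:
  fixes a b :: real
  shows "\<bar>a - b\<bar> < \<bar>b\<bar> \<Longrightarrow> sgn a = sgn b"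
  by (auto simp: sgn_if abs_if split: if_splits)

lemma beta_1_locally_constant:
  assumes x: "x1 \<in> circle" "x2 \<in> circle" "x3 \<in> circle" and "x1 \<noteq> x2" "x2 \<noteq> x3" "x1 \<noteq> x3"
  obtains r where "0 < r"
    "\<And>y1 y2 y3. y1 \<in> circle \<Longrightarrow> y2 \<in> circle \<Longrightarrow> y3 \<in> circle \<Longrightarrow>
      dist y1 x1 < r \<Longrightarrow> dist y2 x2 < r \<Longrightarrow> dist y3 x3 < r \<Longrightarrow> beta_1 y1 y2 y3 = beta_1 x1 x2 x3"
proof -
  define D where "D = orientation x1 x2 x3"
  have "D \<noteq> 0"
    using orientation_neq_0 assms by (simp add: D_def)
  define r where "r = \<bar>D\<bar> / 6"
  have "0 < r" "\<bar>D\<bar> = 6 * r"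
    using \<open>D \<noteq> 0\<close> by (simp_all add: r_def)
  show ?thesis
  proof (rule that)
    show "0 < r" by fact
    fix y1 y2 y3
    assume y: "y1 \<in> circle" "y2 \<in> circle" "y3 \<in> circle"
      and close: "dist y1 x1 < r" "dist y2 x2 < r" "dist y3 x3 < r"
    have "\<bar>orientation y1 y2 y3 - D\<bar> < \<bar>D\<bar>"
      using abs_orientation_diff_le[OF x y] close \<open>\<bar>D\<bar> = 6 * r\<close> by (simp add: D_def)
    then have "sgn (orientation y1 y2 y3) = sgn D" "orientation y1 y2 y3 \<noteq> 0"
      using sgn_eq_if_abs_diff_less \<open>D \<noteq> 0\<close> by (auto simp: sgn_0_0)
    then have "real_of_int (beta_1 y1 y2 y3) = real_of_int (beta_1 x1 x2 x3)"
      using beta_1_eq_sgn_orientation x y \<open>D \<noteq> 0\<close> by (simp add: D_def)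
    then show "beta_1 y1 y2 y3 = beta_1 x1 x2 x3"
      by simp
  qed
qed

section \<open>Almost everywhere on products\<close>

lemma AE_ex_in_set:
  assumes "AE x in M. P x" "emeasure M A \<noteq> 0"
  shows "\<exists>x\<in>A. P x"
proof (rule ccontr)
  assume "\<not> (\<exists>x\<in>A. P x)"
  then have "AE x in M. x \<notin> A"
    using assms(1) by (auto elim: eventually_mono)
  moreover have "A \<subseteq> space M"
    using assms(2) emeasure_notin_sets sets.sets_into_space by blast
  then have "{x \<in> space M. x \<in> A} = A"
    by blast
  ultimately have "emeasure M A = 0"
    using emeasure_eq_0_AE[of "\<lambda>x. x \<in> A" M] by simp
  then show False
    using assms(2) by simp
qed

lemma AE_lebesgue_pair:
  fixes P :: "'a::euclidean_space \<times> 'b::euclidean_space \<Rightarrow> bool"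
  assumes "AE p in lebesgue. P p"
  shows "AE x in lebesgue. AE y in lebesgue. P (x, y)"
proof -
  have "AE p in lborel. P p"
    using assms by (simp add: AE_completion_iff)
  then have "AE p in lborel \<Otimes>\<^sub>M lborel. P p"
    by (simp only: lborel_prod)
  then have "AE x in lborel. AE y in lborel. P (x, y)"
    by (rule lborel_pair.AE_pair)
  then show ?thesis
    by (auto simp: AE_completion_iff intro: AE_completion elim!: AE_mp)
qed

lemma AE_lebesgue_ex_triple:
  fixes P :: "'a::euclidean_space \<times> 'b::euclidean_space \<times> 'c::euclidean_space \<Rightarrow> bool"
  assumes "AE p in lebesgue. P p"
    and "emeasure lebesgue A1 \<noteq> 0" "emeasure lebesgue A2 \<noteq> 0" "emeasure lebesgue A3 \<noteq> 0"
  shows "\<exists>t1\<in>A1. \<exists>t2\<in>A2. \<exists>t3\<in>A3. P (t1, t2, t3)"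
proof -
  obtain t1 where t1: "t1 \<in> A1" "AE q in lebesgue. P (t1, q)"
    using AE_ex_in_set[OF AE_lebesgue_pair[OF assms(1)] assms(2)] by blast
  obtain t2 where t2: "t2 \<in> A2" "AE t3 in lebesgue. P (t1, t2, t3)"
    using AE_ex_in_set[OF AE_lebesgue_pair[OF t1(2)] assms(3)] by blast
  obtain t3 where "t3 \<in> A3" "P (t1, t2, t3)"
    using AE_ex_in_set[OF t2(2) assms(4)] by blast
  then show ?thesis
    using t1(1) t2(1) by blast
qed

lemma essential_graph_ex_triple:
  assumes "AE p in lebesgue. P p" and E: "(x1, L1) \<in> essential_graph \<phi>"
    "(x2, L2) \<in> essential_graph \<phi>" "(x3, L3) \<in> essential_graph \<phi>" and "0 < \<epsilon>"
  obtains t1 t2 t3 where "P (t1, t2, t3)"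
    "dist (cis t1) x1 < \<epsilon>" "dist (cis t2) x2 < \<epsilon>" "dist (cis t3) x3 < \<epsilon>"
    "gdist (\<phi> (cis t1)) L1 < \<epsilon>" "gdist (\<phi> (cis t2)) L2 < \<epsilon>" "gdist (\<phi> (cis t3)) L3 < \<epsilon>"
proof -
  define A where "A x L = {t \<in> {0..<2*pi}. dist (cis t) x < \<epsilon> \<and> gdist (\<phi> (cis t)) L < \<epsilon>}" for x L
  have "emeasure lebesgue (A x L) \<noteq> 0" if "(x, L) \<in> essential_graph \<phi>" for x L
  proof -
    have "\<forall>r>0. 0 < emeasure lebesgue {t \<in> {0..<2*pi}. dist (cis t) x < r \<and> gdist (\<phi> (cis t)) L < r}"
      using that unfolding essential_graph_def by (simp only: mem_Collect_eq prod.case) blast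
    then have "0 < emeasure lebesgue (A x L)"
      unfolding A_def using \<open>0 < \<epsilon>\<close> by blast
    then show ?thesis
      by simp
  qed
  then obtain t1 t2 t3 where "t1 \<in> A x1 L1" "t2 \<in> A x2 L2" "t3 \<in> A x3 L3" "P (t1, t2, t3)"
    using AE_lebesgue_ex_triple[OF assms(1)] E by meson
  then show ?thesis
    using that[of t1 t2 t3] by (simp add: A_def)
qed

theorem lemma8p3:
  fixes \<Gamma> :: "(complex \<Rightarrow> complex) set"
    and \<rho> :: "(complex \<Rightarrow> complex) \<Rightarrow> ('n::finite sympl \<Rightarrow> 'n sympl)"
    and \<phi> :: "complex \<Rightarrow> 'n sympl set"
  assumes lattice: "torsion_free_cocompact_lattice \<Gamma>"
    and hom: "is_hom \<Gamma> \<rho>"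
    and maps: "\<forall>x\<in>circle. \<phi> x \<in> lagrangians"
    and meas: "lag_measurable \<phi>"
    and equiv: "\<forall>g\<in>\<Gamma>. \<forall>x\<in>circle. \<phi> (g x) = \<rho> g ` \<phi> x"
    and cond_i: "AE p in (lebesgue :: (real \<times> real \<times> real) measure).
        beta_n (\<phi> (cis (fst p))) (\<phi> (cis (fst (snd p)))) (\<phi> (cis (snd (snd p))))
          = int CARD('n) * beta_1 (cis (fst p)) (cis (fst (snd p))) (cis (snd (snd p)))"
    and cond_ii: "\<forall>L\<in>lagrangians. AE t in lebesgue. \<phi> (cis t) \<inter> L = {0}"
    and E1: "(x1, L1) \<in> essential_graph \<phi>"
    and E2: "(x2, L2) \<in> essential_graph \<phi>"
    and E3: "(x3, L3) \<in> essential_graph \<phi>"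
    and distinct: "x1 \<noteq> x2" "x2 \<noteq> x3" "x1 \<noteq> x3"
    and transv: "transverse L1 L2" "transverse L2 L3" "transverse L1 L3"
  shows "beta_n L1 L2 L3 = int CARD('n) * beta_1 x1 x2 x3"
proof -
  have x: "x1 \<in> circle" "x2 \<in> circle" "x3 \<in> circle"
    and L: "L1 \<in> lagrangians" "L2 \<in> lagrangians" "L3 \<in> lagrangians"
    using E1 E2 E3 unfolding essential_graph_def by (simp_all only: mem_Collect_eq prod.case)
  obtain \<delta> where "0 < \<delta>" and beta_n_near: "\<And>M1 M2 M3. M1 \<in> lagrangians \<Longrightarrow>
      M2 \<in> lagrangians \<Longrightarrow> M3 \<in> lagrangians \<Longrightarrow> gdist M1 L1 < \<delta> \<Longrightarrow> gdist M2 L2 < \<delta> \<Longrightarrow>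
      gdist M3 L3 < \<delta> \<Longrightarrow> beta_n M1 M2 M3 = beta_n L1 L2 L3"
    using beta_n_locally_constant[OF L transv] by blast
  obtain r where "0 < r" and beta_1_near: "\<And>y1 y2 y3. y1 \<in> circle \<Longrightarrow> y2 \<in> circle \<Longrightarrow>
      y3 \<in> circle \<Longrightarrow> dist y1 x1 < r \<Longrightarrow> dist y2 x2 < r \<Longrightarrow> dist y3 x3 < r \<Longrightarrow>
      beta_1 y1 y2 y3 = beta_1 x1 x2 x3"
    using beta_1_locally_constant[OF x distinct] by blast
  obtain t1 t2 t3
    where eq: "beta_n (\<phi> (cis t1)) (\<phi> (cis t2)) (\<phi> (cis t3))
        = int CARD('n) * beta_1 (cis t1) (cis t2) (cis t3)"
      and close: "dist (cis t1) x1 < min \<delta> r" "dist (cis t2) x2 < min \<delta> r" "dist (cis t3) x3 < min \<delta> r"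
        "gdist (\<phi> (cis t1)) L1 < min \<delta> r" "gdist (\<phi> (cis t2)) L2 < min \<delta> r"
        "gdist (\<phi> (cis t3)) L3 < min \<delta> r"
    using essential_graph_ex_triple[OF cond_i E1 E2 E3, of "min \<delta> r"] \<open>0 < \<delta>\<close> \<open>0 < r\<close> by auto
  have cis: "cis t \<in> circle" for t
    by (simp add: circle_def)
  have "beta_n L1 L2 L3 = beta_n (\<phi> (cis t1)) (\<phi> (cis t2)) (\<phi> (cis t3))"
    by (rule beta_n_near[symmetric]) (use maps cis close in auto)
  also have "\<dots> = int CARD('n) * beta_1 (cis t1) (cis t2) (cis t3)"
    by (rule eq)
  also have "beta_1 (cis t1) (cis t2) (cis t3) = beta_1 x1 x2 x3"
    by (rule beta_1_near) (use cis close in auto)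
  finally show ?thesis .
qed

end
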